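(* Let $a>0$, $b,c\ge 0$, and consider the system $$\dot x=x(1-y+cx-axz),\qquad \dot y=y(-1+x),\qquad \dot z=z(-b+ax^2).$$ Let $f$ be an irreducible Darboux polynomial of degree greater than one with cofactor $K=\alpha_2y$, $\alpha_2\in\mathbb{C}$. Then $\alpha_2=0$.
   Context: A Darboux polynomial is $f\in\mathbb{C}[x,y,z]$ with $x(1-y+cx-axz)f_x+y(-1+x)f_y+z(-b+ax^2)f_z=Kf$ for a polynomial cofactor $K$ of degree at most two. *)

theory Defs
  imports "HOL-Computational_Algebra.Polynomial_Factorial"
begin

text \<open>Polynomials in C[x,y,z] are represented as nested univariate polynomials:
  type complex poly poly poly, outermost variable z, middle y, innermost x.
  This ring is isomorphic to C[x,y,z], and it is a factorial ring.\<close>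

type_synonym cpoly3 = "complex poly poly poly"

definition cst :: "complex \<Rightarrow> cpoly3" where
  "cst c = [:[:[:c:]:]:]"

definition varX :: cpoly3 where
  "varX = [:[:[:0, 1:]:]:]"

definition varY :: cpoly3 where
  "varY = [:[:0, 1:]:]"

definition varZ :: cpoly3 where
  "varZ = [:0, 1:]"

definition coeff3 :: "cpoly3 \<Rightarrow> nat \<Rightarrow> nat \<Rightarrow> nat \<Rightarrow> complex" where
  "coeff3 f i j k = coeff (coeff (coeff f k) j) i"

definition tdeg :: "cpoly3 \<Rightarrow> nat" where
  "tdeg f = Max ({i + j + k | i j k. coeff3 f i j k \<noteq> 0} \<union> {0})"

definition dX :: "cpoly3 \<Rightarrow> cpoly3" where
  "dX f = map_poly (map_poly pderiv) f"

definition dY :: "cpoly3 \<Rightarrow> cpoly3" where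
  "dY f = map_poly pderiv f"

definition dZ :: "cpoly3 \<Rightarrow> cpoly3" where
  "dZ f = pderiv f"

definition darboux :: "real \<Rightarrow> real \<Rightarrow> real \<Rightarrow> cpoly3 \<Rightarrow> cpoly3 \<Rightarrow> bool" where
  "darboux a b c f K \<longleftrightarrow> f \<noteq> 0 \<and> tdeg K \<le> 2 \<and>
     varX * (1 - varY + cst (complex_of_real c) * varX - cst (complex_of_real a) * varX * varZ) * dX f
     + varY * (-1 + varX) * dY f
     + varZ * (- cst (complex_of_real b) + cst (complex_of_real a) * varX ^ 2) * dZ f
     = K * f"

end

theory Submission
  imports Defs "Subresultants.More_Homomorphisms"
begin

(* Setting x = 0 in the Darboux equation kills the x-derivative term and leaves, for
   g = f(0, y, z), the equation  y g_y + b z g_z + \<alpha>2 y g = 0.  The operator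
   g \<mapsto> y g_y + b z g_z maps every monomial to a multiple of itself, whereas
   multiplication by y raises the y-degree, so comparing the top y-coefficient of each
   z-coefficient gives g = 0 unless \<alpha>2 = 0.  Then x divides f, irreducibility makes f
   a constant multiple of x, and f has degree one. *)

lemma euler_eq_x_mult_imp_zero:
  fixes q :: "'a::idom poly"
  assumes "\<gamma> \<noteq> 0"
    and "[:0, 1:] * pderiv q + [:\<beta>:] * q + [:\<gamma>:] * [:0, 1:] * q = 0"
  shows "q = 0"
proof (rule ccontr)
  assume "q \<noteq> 0"
  have "coeff ([:0, 1:] * pderiv q + [:\<beta>:] * q + [:\<gamma>:] * [:0, 1:] * q) (Suc (degree q))
      = \<gamma> * lead_coeff q"
    by (simp add: coeff_pderiv coeff_eq_0)
  with assms \<open>q \<noteq> 0\<close> show False by simp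
qed

lemma euler_yz_eq_y_mult_imp_zero:
  fixes g :: "'a::idom poly poly"
  assumes "\<gamma> \<noteq> 0"
    and "[:[:0, 1:]:] * map_poly pderiv g + [:[:\<beta>:]:] * [:0, 1:] * pderiv g
      + [:[:\<gamma>:]:] * [:[:0, 1:]:] * g = 0"
  shows "g = 0"
proof (rule poly_eqI)
  fix k
  have "coeff ([:[:0, 1:]:] * map_poly pderiv g + [:[:\<beta>:]:] * [:0, 1:] * pderiv g
      + [:[:\<gamma>:]:] * [:[:0, 1:]:] * g) k
    = [:0, 1:] * pderiv (coeff g k) + [:of_nat k * \<beta>:] * coeff g k
      + [:\<gamma>:] * [:0, 1:] * coeff g k"
    by (cases k) (simp_all add: coeff_map_poly coeff_pderiv of_nat_poly)
  with assms show "coeff g k = coeff 0 k"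
    using euler_eq_x_mult_imp_zero by auto
qed

lemma tdeg_leI:
  assumes "\<And>i j k. coeff3 f i j k \<noteq> 0 \<Longrightarrow> i + j + k \<le> n"
  shows "tdeg f \<le> n"
proof -
  let ?S = "{i + j + k | i j k. coeff3 f i j k \<noteq> 0} \<union> {0}"
  have "?S \<subseteq> {..n}"
    using assms by auto
  moreover from this have "finite ?S"
    using finite_subset by blast
  ultimately show ?thesis
    unfolding tdeg_def by (auto simp: Max_le_iff)
qed

lemma tdeg_le_1_if_irreducible_varX_dvd:
  assumes "irreducible f" and "varX dvd f"
  shows "tdeg f \<le> 1"
proof -
  obtain g where f: "f = varX * g"
    using assms(2) by blast
  have "\<not> is_unit varX"
    by (simp add: varX_def is_unit_poly_iff)
  with assms(1) f have "is_unit g"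
    by (auto dest: irreducibleD)
  then obtain u where "g = [:[:[:u:]:]:]"
    by (auto simp: is_unit_poly_iff elim: degree_eq_zeroE)
  with f have "f = [:[:[:0, u:]:]:]"
    by (simp add: varX_def)
  then show ?thesis
    by (intro tdeg_leI) (auto simp: coeff3_def coeff_pCons split: nat.splits)
qed

definition eval_x0 :: "cpoly3 \<Rightarrow> complex poly poly" where
  "eval_x0 = map_poly (map_poly (\<lambda>p. poly p 0))"

interpretation poly_at_0: map_poly_idom_hom "\<lambda>p :: complex poly. poly p 0" ..

interpretation map_poly_at_0: map_poly_idom_hom "map_poly (\<lambda>p :: complex poly. poly p 0)" ..

interpretation eval_x0: idom_hom eval_x0
  unfolding eval_x0_def ..

lemma eval_x0_dY: "eval_x0 (dY f) = map_poly pderiv (eval_x0 f)"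
  unfolding eval_x0_def dY_def
  by (simp add: map_poly_map_poly o_def poly_hom.map_poly_pderiv)

lemma eval_x0_dZ: "eval_x0 (dZ f) = pderiv (eval_x0 f)"
  unfolding eval_x0_def dZ_def by (rule poly_at_0.map_poly_pderiv)

lemma eval_x0_varX: "eval_x0 varX = 0"
  and eval_x0_varY: "eval_x0 varY = [:[:0, 1:]:]"
  and eval_x0_varZ: "eval_x0 varZ = [:0, 1:]"
  and eval_x0_cst: "eval_x0 (cst c) = [:[:c:]:]"
  by (simp_all add: eval_x0_def varX_def varY_def varZ_def cst_def hom_distribs)

lemma varX_dvd_iff_eval_x0: "varX dvd f \<longleftrightarrow> eval_x0 f = 0"
proof -
  have "varX dvd f \<longleftrightarrow> (\<forall>k j. [:0, 1:] dvd coeff (coeff f k) j)"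
    by (simp add: varX_def const_poly_dvd_iff)
  also have "\<dots> \<longleftrightarrow> (\<forall>k j. poly (coeff (coeff f k) j) 0 = 0)"
    by (simp add: poly_eq_0_iff_dvd)
  also have "\<dots> \<longleftrightarrow> eval_x0 f = 0"
    by (simp add: eval_x0_def poly_eq_iff coeff_map_poly)
  finally show ?thesis .
qed

lemma darboux_y_cofactor_at_x0:
  assumes "darboux a b c f (cst \<alpha> * varY)"
  shows "[:[:0, 1:]:] * map_poly pderiv (eval_x0 f)
      + [:[:complex_of_real b:]:] * [:0, 1:] * pderiv (eval_x0 f)
      + [:[:\<alpha>:]:] * [:[:0, 1:]:] * eval_x0 f = 0"
proof -
  from assms have eq: "varX * (1 - varY + cst (complex_of_real c) * varX
        - cst (complex_of_real a) * varX * varZ) * dX f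
      + varY * (-1 + varX) * dY f
      + varZ * (- cst (complex_of_real b) + cst (complex_of_real a) * varX ^ 2) * dZ f
    = cst \<alpha> * varY * f"
    unfolding darboux_def by blast
  have dX_term: "eval_x0 (varX * (1 - varY + cst (complex_of_real c) * varX
        - cst (complex_of_real a) * varX * varZ) * dX f) = 0"
    by (simp add: eval_x0.hom_mult eval_x0_varX)
  have dY_term: "eval_x0 (varY * (-1 + varX) * dY f)
      = - ([:[:0, 1:]:] * map_poly pderiv (eval_x0 f))"
    unfolding eval_x0.hom_mult eval_x0.hom_add eval_x0.hom_uminus eval_x0.hom_one
      eval_x0_varX eval_x0_varY eval_x0_dY
    by (simp only: add_0_right mult_minus1_right mult_minus_left)
  have dZ_term: "eval_x0 (varZ * (- cst (complex_of_real b)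
        + cst (complex_of_real a) * varX ^ 2) * dZ f)
      = - ([:[:complex_of_real b:]:] * [:0, 1:] * pderiv (eval_x0 f))"
    unfolding eval_x0.hom_mult eval_x0.hom_add eval_x0.hom_uminus eval_x0.hom_power
      eval_x0_varX eval_x0_varZ eval_x0_cst eval_x0_dZ
    by (simp only: power_zero_numeral mult_zero_right add_0_right mult_minus_right
        mult_minus_left mult.commute[of "[:0, 1:]"])
  have cofactor_term: "eval_x0 (cst \<alpha> * varY * f) = [:[:\<alpha>:]:] * [:[:0, 1:]:] * eval_x0 f"
    by (simp add: eval_x0.hom_mult eval_x0_varY eval_x0_cst)
  from arg_cong[OF eq, of eval_x0] show ?thesis
    unfolding eval_x0.hom_add dX_term dY_term dZ_term cofactor_term add_0_left
      minus_add_distrib[symmetric] neg_eq_iff_add_eq_0 .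
qed

theorem lemma4p4:
  fixes a b c :: real and f :: cpoly3 and \<alpha>2 :: complex
  assumes "a > 0" and "b \<ge> 0" and "c \<ge> 0"
    and "irreducible f"
    and "tdeg f > 1"
    and "darboux a b c f (cst \<alpha>2 * varY)"
  shows "\<alpha>2 = 0"
proof (rule ccontr)
  assume "\<alpha>2 \<noteq> 0"
  then have "eval_x0 f = 0"
    using euler_yz_eq_y_mult_imp_zero darboux_y_cofactor_at_x0[OF assms(6)] by blast
  then have "varX dvd f"
    by (simp add: varX_dvd_iff_eval_x0)
  with assms(4) have "tdeg f \<le> 1"
    by (rule tdeg_le_1_if_irreducible_varX_dvd)
  with assms(5) show False
    by simp
qed

end
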